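(* Let $0<a<1$ and $b>0$. Suppose $w\sim\mathrm{Be}(a,1-a)$, $z\mid w\sim\mathrm{Ga}(b,w)$, $v\mid z,w\sim\mathrm{Ga}(z,1)$ and $u\mid v,z,w\sim\mathrm{Ex}(v)$. Then the marginal density of $u$ is $\pi_{\rm RSB}(u;a,b)$.
   Context: For $a,b>0$, $\pi_{\rm RSB}(u;a,b)=\frac{1}{B(a,b)}\frac{\{\log(1+u)\}^{a-1}}{1+u}\frac{1}{\{1+\log(1+u)\}^{a+b}}$, $u>0$. $\mathrm{Be}(a,1-a)$ is the beta distribution on $(0,1)$; $\mathrm{Ga}(\alpha,\beta)$ is the gamma distribution with shape $\alpha$ and rate $\beta$; $\mathrm{Ex}(v)$ is the exponential distribution with rate $v$. *)

theory Defs
  imports "HOL-Probability.Probability"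
begin

definition beta_density :: "real \<Rightarrow> real \<Rightarrow> real \<Rightarrow> real" where
  "beta_density p q x =
     (if 0 < x \<and> x < 1 then x powr (p - 1) * (1 - x) powr (q - 1) / Beta p q else 0)"

definition gamma_density :: "real \<Rightarrow> real \<Rightarrow> real \<Rightarrow> real" where
  "gamma_density \<alpha> \<beta> x =
     (if 0 < x then \<beta> powr \<alpha> * x powr (\<alpha> - 1) * exp (- \<beta> * x) / Gamma \<alpha> else 0)"

definition pi_RSB :: "real \<Rightarrow> real \<Rightarrow> real \<Rightarrow> real" where
  "pi_RSB u a b =
     (if 0 < u then (1 / Beta a b) * (ln (1 + u)) powr (a - 1) / (1 + u)
                    * (1 / (1 + ln (1 + u)) powr (a + b)) else 0)"

end

theory Submission
  imports Defs
begin

(* Integrate out the latent variables from the inside.  Mixing Ex(v) over v ~ Ga(z, 1) gives the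
   Lomax density z (1 + u) powr -(z + 1) = z exp (-(z + 1) L) with L = ln (1 + u); the Laplace
   transform of the size-biased gamma law then turns the Ga(b, w) mixture into
   b w^b / ((1 + u) (w + L)^(b + 1)); finally the Moebius substitution x = L s / (1 + L - s)
   reduces the Be(a, 1 - a) mixture to the beta integral B(a + b, 1 - a) L^(a - 1) (1 + L)^-(a + b),
   and the Gamma factors collapse to 1 / B(a, b).  On the measure side, binding a density with a
   kernel of densities gives the density of the mixture, by Tonelli. *)

section \<open>Mixtures of densities\<close>

lemma measurable_subprob_truncation:
  assumes sets_f: "\<And>x. x \<in> space M \<Longrightarrow> sets (f x) = sets N" and "space N \<noteq> {}"
    and meas: "\<And>B. B \<in> sets N \<Longrightarrow> (\<lambda>x. emeasure (f x) B) \<in> borel_measurable M"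
  shows "(\<lambda>x. if emeasure (f x) (space N) \<le> 1 then f x else null_measure N) \<in> M \<rightarrow>\<^sub>M subprob_algebra N"
proof (rule measurable_subprob_algebra)
  fix x assume x: "x \<in> space M"
  have "space (f x) = space N"
    using sets_f[OF x] by (rule sets_eq_imp_space_eq)
  then show "subprob_space (if emeasure (f x) (space N) \<le> 1 then f x else null_measure N)"
    using \<open>space N \<noteq> {}\<close> by (auto intro!: subprob_spaceI)
  show "sets (if emeasure (f x) (space N) \<le> 1 then f x else null_measure N) = sets N"
    using sets_f[OF x] by simp
next
  fix B assume "B \<in> sets N"
  then show "(\<lambda>x. emeasure (if emeasure (f x) (space N) \<le> 1 then f x else null_measure N) B) \<in> borel_measurable M"
    using meas[of B] meas[of "space N"] by (simp add: if_distrib[of "\<lambda>m. emeasure m B"])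
qed

text \<open>Points where \<open>f x\<close> is not a sub-probability measure never lie in a measurable set of
  \<open>subprob_algebra N\<close>, so cutting them off does not change the distribution of \<open>f\<close>.\<close>
lemma bind_eq_bind_subprob_truncation:
  assumes "space M \<noteq> {}" "space N \<noteq> {}"
    and sets_f: "\<And>x. x \<in> space M \<Longrightarrow> sets (f x) = sets N"
    and meas: "\<And>B. B \<in> sets N \<Longrightarrow> (\<lambda>x. emeasure (f x) B) \<in> borel_measurable M"
    and ae: "AE x in M. emeasure (f x) (space N) \<le> 1"
  defines "g \<equiv> \<lambda>x. if emeasure (f x) (space N) \<le> 1 then f x else null_measure N"
  shows "M \<bind> f = M \<bind> g"
proof -
  have g: "g \<in> M \<rightarrow>\<^sub>M subprob_algebra N"
    unfolding g_def using sets_f assms(2) meas by (rule measurable_subprob_truncation)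
  define S where "S = {x \<in> space M. emeasure (f x) (space N) \<le> 1}"
  have S: "S \<in> sets M"
    unfolding S_def using meas[of "space N"] by measurable
  have "distr M (subprob_algebra N) f = distr M (subprob_algebra N) g"
    unfolding distr_def
  proof (rule measure_of_eq[OF sets.space_closed])
    fix A assume "A \<in> sigma_sets (space (subprob_algebra N)) (sets (subprob_algebra N))"
    then have A: "A \<in> sets (subprob_algebra N)"
      by (simp add: sets.sigma_sets_eq)
    have "emeasure (f x) (space N) \<le> 1" if "x \<in> space M" "f x \<in> A" for x
    proof -
      have "subprob_space (f x)"
        using sets.sets_into_space[OF A] that(2) by (auto simp: space_subprob_algebra)
      then show ?thesis
        using subprob_space.emeasure_space_le_1 sets_eq_imp_space_eq[OF sets_f[OF that(1)]] by metis
    qed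
    then have "f -` A \<inter> space M = g -` A \<inter> space M \<inter> S"
      by (auto simp: g_def S_def)
    moreover have "g -` A \<inter> space M \<in> sets M"
      using measurable_sets[OF g A] .
    ultimately show "emeasure M (f -` A \<inter> space M) = emeasure M (g -` A \<inter> space M)"
      using S ae by (intro emeasure_eq_AE) (auto simp: g_def)
  qed
  moreover obtain x0 where "x0 \<in> space M" "(SOME x. x \<in> space M) = x0"
    using some_in_eq assms(1) by blast
  then have "subprob_algebra (f (SOME x. x \<in> space M)) = subprob_algebra N"
      "subprob_algebra (g (SOME x. x \<in> space M)) = subprob_algebra N"
    using sets_f by (auto simp: g_def intro: subprob_algebra_cong)
  ultimately show ?thesis
    unfolding bind_def using assms(1) by simp
qed

lemma emeasure_bind_AE_subprob:
  assumes "space M \<noteq> {}" "space N \<noteq> {}"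
    and sets_f: "\<And>x. x \<in> space M \<Longrightarrow> sets (f x) = sets N"
    and meas: "\<And>B. B \<in> sets N \<Longrightarrow> (\<lambda>x. emeasure (f x) B) \<in> borel_measurable M"
    and ae: "AE x in M. emeasure (f x) (space N) \<le> 1"
    and B: "B \<in> sets N"
  shows "emeasure (M \<bind> f) B = (\<integral>\<^sup>+x. emeasure (f x) B \<partial>M)"
proof -
  let ?g = "\<lambda>x. if emeasure (f x) (space N) \<le> 1 then f x else null_measure N"
  have "emeasure (M \<bind> f) B = (\<integral>\<^sup>+x. emeasure (?g x) B \<partial>M)"
    using bind_eq_bind_subprob_truncation[OF assms(1-5)]
      emeasure_bind[OF assms(1) measurable_subprob_truncation[OF sets_f assms(2) meas] B] by simp
  also have "\<dots> = (\<integral>\<^sup>+x. emeasure (f x) B \<partial>M)"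
    using ae by (intro nn_integral_cong_AE) auto
  finally show ?thesis .
qed

lemma (in pair_sigma_finite) nn_integral_mixture:
  assumes [measurable]: "p \<in> borel_measurable M1" "case_prod k \<in> borel_measurable (M1 \<Otimes>\<^sub>M M2)"
  shows "(\<integral>\<^sup>+y. (\<integral>\<^sup>+x. p x * k x y \<partial>M1) \<partial>M2) = (\<integral>\<^sup>+x. p x * (\<integral>\<^sup>+y. k x y \<partial>M2) \<partial>M1)"
proof -
  have "(\<integral>\<^sup>+y. (\<integral>\<^sup>+x. p x * k x y \<partial>M1) \<partial>M2) = (\<integral>\<^sup>+x. (\<integral>\<^sup>+y. p x * k x y \<partial>M2) \<partial>M1)"
    by (rule Fubini') measurable
  also have "\<dots> = (\<integral>\<^sup>+x. p x * (\<integral>\<^sup>+y. k x y \<partial>M2) \<partial>M1)"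
    by (intro nn_integral_cong nn_integral_cmult) measurable
  finally show ?thesis .
qed

lemma (in pair_sigma_finite) nn_integral_mixture_le_1:
  assumes [measurable]: "p \<in> borel_measurable M1" "case_prod k \<in> borel_measurable (M1 \<Otimes>\<^sub>M M2)"
    and p: "(\<integral>\<^sup>+x. p x \<partial>M1) \<le> 1"
    and k: "AE x in density M1 p. (\<integral>\<^sup>+y. k x y \<partial>M2) \<le> 1"
  shows "(\<integral>\<^sup>+y. (\<integral>\<^sup>+x. p x * k x y \<partial>M1) \<partial>M2) \<le> 1"
proof -
  have "(\<integral>\<^sup>+y. (\<integral>\<^sup>+x. p x * k x y \<partial>M1) \<partial>M2) = (\<integral>\<^sup>+x. (\<integral>\<^sup>+y. k x y \<partial>M2) \<partial>density M1 p)"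
    by (simp add: nn_integral_mixture nn_integral_density)
  also have "\<dots> \<le> (\<integral>\<^sup>+x. 1 \<partial>density M1 p)"
    using k by (rule nn_integral_mono_AE)
  also have "\<dots> = (\<integral>\<^sup>+x. p x \<partial>M1)"
    by (subst nn_integral_density) auto
  finally show ?thesis
    using p by simp
qed

lemma (in pair_sigma_finite) bind_density_kernel:
  assumes [measurable]: "p \<in> borel_measurable M1" "case_prod k \<in> borel_measurable (M1 \<Otimes>\<^sub>M M2)"
    and "space M1 \<noteq> {}" "space M2 \<noteq> {}"
    and subprob: "AE x in density M1 p. (\<integral>\<^sup>+y. k x y \<partial>M2) \<le> 1"
  shows "density M1 p \<bind> (\<lambda>x. density M2 (k x)) = density M2 (\<lambda>y. \<integral>\<^sup>+x. p x * k x y \<partial>M1)"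
proof (rule measure_eqI)
  show sets_eq: "sets (density M1 p \<bind> (\<lambda>x. density M2 (k x))) = sets (density M2 (\<lambda>y. \<integral>\<^sup>+x. p x * k x y \<partial>M1))"
    using \<open>space M1 \<noteq> {}\<close> by (subst sets_bind[where N=M2]) auto
  have emeasure_k: "emeasure (density M2 (k x)) C = (\<integral>\<^sup>+y. k x y * indicator C y \<partial>M2)"
    if "x \<in> space M1" "C \<in> sets M2" for x C
    using that by (subst emeasure_density) auto
  have measurable_k: "(\<lambda>x. emeasure (density M2 (k x)) C) \<in> borel_measurable M1"
    if [measurable]: "C \<in> sets M2" for C
  proof -
    have "(\<lambda>x. \<integral>\<^sup>+y. k x y * indicator C y \<partial>M2) \<in> borel_measurable M1"
      by measurable
    then show ?thesis
      by (simp add: emeasure_k cong: measurable_cong)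
  qed
  fix B assume "B \<in> sets (density M1 p \<bind> (\<lambda>x. density M2 (k x)))"
  then have [measurable]: "B \<in> sets M2"
    using sets_eq by simp
  have "emeasure (density M1 p \<bind> (\<lambda>x. density M2 (k x))) B
      = (\<integral>\<^sup>+x. emeasure (density M2 (k x)) B \<partial>density M1 p)"
    using \<open>space M1 \<noteq> {}\<close> \<open>space M2 \<noteq> {}\<close> subprob measurable_k
    by (intro emeasure_bind_AE_subprob) (auto simp: emeasure_k)
  also have "\<dots> = (\<integral>\<^sup>+x. p x * (\<integral>\<^sup>+y. k x y * indicator B y \<partial>M2) \<partial>M1)"
    using measurable_k by (subst nn_integral_density) (auto intro!: nn_integral_cong simp: emeasure_k)
  also have "\<dots> = (\<integral>\<^sup>+y. (\<integral>\<^sup>+x. p x * (k x y * indicator B y) \<partial>M1) \<partial>M2)"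
    by (rule nn_integral_mixture[symmetric]) measurable
  also have "\<dots> = emeasure (density M2 (\<lambda>y. \<integral>\<^sup>+x. p x * k x y \<partial>M1)) B"
    by (subst emeasure_density)
      (auto intro!: nn_integral_cong simp: nn_integral_multc[symmetric] mult.assoc)
  finally show "emeasure (density M1 p \<bind> (\<lambda>x. density M2 (k x))) B = \<dots>" .
qed

section \<open>Gamma integrals\<close>

lemma borel_measurable_Gamma_real[measurable]: "(Gamma :: real \<Rightarrow> real) \<in> borel_measurable borel"
proof -
  have "(\<lambda>x::real. inverse (rGamma x)) \<in> borel_measurable borel"
    by (intro borel_measurable_inverse borel_measurable_continuous_onI continuous_on_rGamma)
  then show ?thesis
    by (simp add: Gamma_def[abs_def])
qed

lemma borel_measurable_gamma_density[measurable]: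
  assumes [measurable]: "f \<in> borel_measurable M" "g \<in> borel_measurable M" "h \<in> borel_measurable M"
  shows "(\<lambda>x. gamma_density (f x) (g x) (h x)) \<in> borel_measurable M"
  unfolding gamma_density_def by measurable

lemma borel_measurable_beta_density[measurable]:
  assumes [measurable]: "h \<in> borel_measurable M"
  shows "(\<lambda>x. beta_density p q (h x)) \<in> borel_measurable M"
  unfolding beta_density_def by measurable

lemma borel_measurable_exponential_density[measurable]:
  assumes [measurable]: "f \<in> borel_measurable M" "h \<in> borel_measurable M"
  shows "(\<lambda>x. exponential_density (f x) (h x)) \<in> borel_measurable M"
  unfolding exponential_density_def by measurable

lemma borel_measurable_pi_RSB[measurable]:
  assumes [measurable]: "h \<in> borel_measurable M"
  shows "(\<lambda>x. pi_RSB (h x) a b) \<in> borel_measurable M"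
  unfolding pi_RSB_def by measurable

lemma nn_integral_powr_exp:
  fixes \<alpha> c :: real
  assumes "0 < \<alpha>" "0 < c"
  shows "(\<integral>\<^sup>+x. ennreal (indicator {0<..} x * x powr (\<alpha> - 1) * exp (- c * x)) \<partial>lborel)
       = ennreal (Gamma \<alpha> / c powr \<alpha>)"
proof -
  have "(\<integral>\<^sup>+x. ennreal (indicator {0<..} x * x powr (\<alpha> - 1) * exp (- c * x)) \<partial>lborel)
      = \<bar>1 / c\<bar> * (\<integral>\<^sup>+x. ennreal (indicator {0<..} (0 + 1 / c * x) * (0 + 1 / c * x) powr (\<alpha> - 1)
          * exp (- c * (0 + 1 / c * x))) \<partial>lborel)"
    using \<open>0 < c\<close> by (intro nn_integral_real_affine) auto
  also have "\<dots> = ennreal (1 / c) * (\<integral>\<^sup>+x. ennreal (indicator {0<..} (x / c) * (x / c) powr (\<alpha> - 1) * exp (- x)) \<partial>lborel)"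
    using \<open>0 < c\<close> by simp
  also have "(\<lambda>x. ennreal (indicator {0<..} (x / c) * (x / c) powr (\<alpha> - 1) * exp (- x)))
      = (\<lambda>x. ennreal (c powr (1 - \<alpha>)) * ennreal (indicator {0..} x * x powr (\<alpha> - 1) / exp x))"
  proof
    fix x :: real
    show "ennreal (indicator {0<..} (x / c) * (x / c) powr (\<alpha> - 1) * exp (- x))
        = ennreal (c powr (1 - \<alpha>)) * ennreal (indicator {0..} x * x powr (\<alpha> - 1) / exp x)"
    proof (cases "0 < x")
      case True
      have "(x / c) powr (\<alpha> - 1) = c powr (1 - \<alpha>) * x powr (\<alpha> - 1)"
        using True \<open>0 < c\<close> by (simp add: powr_divide powr_minus_divide[of c "\<alpha> - 1", simplified])
      then show ?thesis
        using True \<open>0 < c\<close> by (simp add: ennreal_mult'[symmetric] exp_minus divide_inverse)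
    qed (use \<open>0 < c\<close> in \<open>auto simp: indicator_def zero_less_divide_iff\<close>)
  qed
  also have "(\<integral>\<^sup>+x. ennreal (c powr (1 - \<alpha>)) * ennreal (indicator {0..} x * x powr (\<alpha> - 1) / exp x) \<partial>lborel)
      = ennreal (c powr (1 - \<alpha>)) * ennreal (Gamma \<alpha>)"
    using \<open>0 < \<alpha>\<close> by (subst nn_integral_cmult) (simp_all add: Gamma_conv_nn_integral_real)
  also have "ennreal (1 / c) * (ennreal (c powr (1 - \<alpha>)) * ennreal (Gamma \<alpha>)) = ennreal (Gamma \<alpha> / c powr \<alpha>)"
  proof -
    have "1 / c * (c powr (1 - \<alpha>) * Gamma \<alpha>) = Gamma \<alpha> / c powr \<alpha>"
      using \<open>0 < c\<close> by (simp add: powr_diff)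
    then show ?thesis
      using \<open>0 < c\<close> Gamma_real_pos[OF \<open>0 < \<alpha>\<close>] by (simp add: ennreal_mult[symmetric])
  qed
  finally show ?thesis .
qed

lemma gamma_density_eq_scaled:
  "gamma_density \<alpha> \<beta> x = \<beta> powr \<alpha> / Gamma \<alpha> * (indicator {0<..} x * x powr (\<alpha> - 1) * exp (- \<beta> * x))"
  by (simp add: gamma_density_def indicator_def)

lemma nn_integral_gamma_density:
  assumes "0 < \<alpha>" "0 < \<beta>"
  shows "(\<integral>\<^sup>+x. ennreal (gamma_density \<alpha> \<beta> x) \<partial>lborel) = 1"
proof -
  have "(\<integral>\<^sup>+x. ennreal (gamma_density \<alpha> \<beta> x) \<partial>lborel)
      = (\<integral>\<^sup>+x. ennreal (\<beta> powr \<alpha> / Gamma \<alpha>) * ennreal (indicator {0<..} x * x powr (\<alpha> - 1) * exp (- \<beta> * x)) \<partial>lborel)"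
    using assms by (simp add: gamma_density_eq_scaled ennreal_mult'[symmetric])
  also have "\<dots> = ennreal (\<beta> powr \<alpha> / Gamma \<alpha>) * (\<integral>\<^sup>+x. ennreal (indicator {0<..} x * x powr (\<alpha> - 1) * exp (- \<beta> * x)) \<partial>lborel)"
    by (rule nn_integral_cmult) measurable
  also have "\<dots> = ennreal (\<beta> powr \<alpha> / Gamma \<alpha> * (Gamma \<alpha> / \<beta> powr \<alpha>))"
    using assms by (subst nn_integral_powr_exp) (simp_all add: ennreal_mult'[symmetric])
  also have "\<dots> = 1"
    using assms by (simp add: Gamma_real_pos_exp)
  finally show ?thesis .
qed

lemma nn_integral_gamma_density_mult_exp:
  assumes "0 < \<alpha>" "0 < \<beta>" "0 \<le> c"
  shows "(\<integral>\<^sup>+x. ennreal (gamma_density \<alpha> \<beta> x * (x * exp (- c * x))) \<partial>lborel)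
       = ennreal (\<alpha> * \<beta> powr \<alpha> / (\<beta> + c) powr (\<alpha> + 1))"
proof -
  have "gamma_density \<alpha> \<beta> x * (x * exp (- c * x))
      = \<beta> powr \<alpha> / Gamma \<alpha> * (indicator {0<..} x * x powr (\<alpha> + 1 - 1) * exp (- (\<beta> + c) * x))" for x
  proof (cases "0 < x")
    case True
    have "x powr (\<alpha> - 1) * x = x powr (\<alpha> + 1 - 1)"
      using True powr_mult_base[of x "\<alpha> - 1"] by (simp add: mult.commute)
    moreover have "exp (- \<beta> * x) * exp (- c * x) = exp (- (\<beta> + c) * x)"
      by (simp add: exp_add[symmetric] algebra_simps)
    moreover have "gamma_density \<alpha> \<beta> x * (x * exp (- c * x))
        = \<beta> powr \<alpha> / Gamma \<alpha> * (x powr (\<alpha> - 1) * x) * (exp (- \<beta> * x) * exp (- c * x))"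
      using True by (simp add: gamma_density_def)
    ultimately show ?thesis
      using True by simp
  qed (simp add: gamma_density_def)
  then have "(\<integral>\<^sup>+x. ennreal (gamma_density \<alpha> \<beta> x * (x * exp (- c * x))) \<partial>lborel)
      = (\<integral>\<^sup>+x. ennreal (\<beta> powr \<alpha> / Gamma \<alpha>) * ennreal (indicator {0<..} x * x powr (\<alpha> + 1 - 1) * exp (- (\<beta> + c) * x)) \<partial>lborel)"
    using assms by (simp add: ennreal_mult'[symmetric])
  also have "\<dots> = ennreal (\<beta> powr \<alpha> / Gamma \<alpha>) * (\<integral>\<^sup>+x. ennreal (indicator {0<..} x * x powr (\<alpha> + 1 - 1) * exp (- (\<beta> + c) * x)) \<partial>lborel)"
    by (rule nn_integral_cmult) measurable
  also have "\<dots> = ennreal (\<beta> powr \<alpha> / Gamma \<alpha> * (Gamma (\<alpha> + 1) / (\<beta> + c) powr (\<alpha> + 1)))"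
    using assms by (subst nn_integral_powr_exp) (simp_all add: ennreal_mult'[symmetric])
  also have "Gamma (\<alpha> + 1) = \<alpha> * Gamma \<alpha>"
    using assms by (simp add: Gamma_plus1 nonpos_Ints_def)
  finally show ?thesis
    using assms Gamma_real_pos[OF assms(1)] by simp
qed

section \<open>Beta integrals\<close>

lemma nn_integral_Beta_real:
  assumes "0 < \<alpha>" "0 < \<beta>"
  shows "(\<integral>\<^sup>+s. ennreal (indicator {0..1} s * s powr (\<alpha> - 1) * (1 - s) powr (\<beta> - 1)) \<partial>lborel) = ennreal (Beta \<alpha> \<beta>)"
proof -
  have "(\<integral>\<^sup>+s. ennreal (s powr (\<alpha> - 1) * (1 - s) powr (\<beta> - 1)) * indicator {0..1} s \<partial>lborel) = ennreal (Beta \<alpha> \<beta>)"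
    by (rule nn_integral_has_integral_lebesgue'[OF _ has_integral_Beta_real[OF assms]]) auto
  then show ?thesis
    by (simp add: indicator_mult_ennreal mult.commute mult.left_commute)
qed

lemma shifted_beta_integrand_moebius:
  fixes L s \<alpha> \<beta> :: real
  assumes "0 < L" "0 < s" "s < 1"
  defines "x \<equiv> L * s / (1 + L - s)"
  shows "x powr (\<alpha> - 1) * (1 - x) powr (\<beta> - 1) * (x + L) powr (- (\<alpha> + \<beta>)) * (L * (1 + L) / (1 + L - s)\<^sup>2)
       = L powr (- \<beta>) * (1 + L) powr (- \<alpha>) * (s powr (\<alpha> - 1) * (1 - s) powr (\<beta> - 1))"
proof -
  have D: "0 < 1 + L - s"
    using assms by simp
  then have x1: "1 - x = (1 + L) * (1 - s) / (1 + L - s)" and xL: "x + L = L * (1 + L) / (1 + L - s)"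
    unfolding x_def by (simp_all add: field_simps)
  have "x \<noteq> 0" "1 - x \<noteq> 0" "x + L \<noteq> 0"
    using assms D unfolding x1 xL by (simp_all add: x_def)
  moreover have "L * (1 + L) / (1 + L - s)\<^sup>2 = exp (ln L + ln (1 + L) - ln (1 + L - s) - ln (1 + L - s))"
    using assms D by (simp only: exp_diff exp_add) (simp add: power2_eq_square)
  ultimately have "x powr (\<alpha> - 1) * (1 - x) powr (\<beta> - 1) * (x + L) powr (- (\<alpha> + \<beta>)) * (L * (1 + L) / (1 + L - s)\<^sup>2)
      = exp ((\<alpha> - 1) * ln x + (\<beta> - 1) * ln (1 - x) + - (\<alpha> + \<beta>) * ln (x + L)
          + (ln L + ln (1 + L) - ln (1 + L - s) - ln (1 + L - s)))"
    by (simp only: powr_def if_False exp_add)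
  also have "(\<alpha> - 1) * ln x + (\<beta> - 1) * ln (1 - x) + - (\<alpha> + \<beta>) * ln (x + L)
      + (ln L + ln (1 + L) - ln (1 + L - s) - ln (1 + L - s))
      = - \<beta> * ln L + - \<alpha> * ln (1 + L) + ((\<alpha> - 1) * ln s + (\<beta> - 1) * ln (1 - s))"
  proof -
    have ln_x: "ln x = ln L + ln s - ln (1 + L - s)"
      using assms D by (simp add: x_def ln_div ln_mult)
    have ln_1x: "ln (1 - x) = ln (1 + L) + ln (1 - s) - ln (1 + L - s)"
      unfolding x1 using assms D by (simp add: ln_div ln_mult)
    have ln_xL: "ln (x + L) = ln L + ln (1 + L) - ln (1 + L - s)"
      unfolding xL using assms D by (simp add: ln_div ln_mult)
    show ?thesis
      unfolding ln_x ln_1x ln_xL by (simp add: algebra_simps)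
  qed
  also have "exp \<dots> = L powr (- \<beta>) * (1 + L) powr (- \<alpha>) * (s powr (\<alpha> - 1) * (1 - s) powr (\<beta> - 1))"
    using assms by (simp only: powr_def exp_add) simp
  finally show ?thesis .
qed

lemma shifted_beta_integrand_moebius_indicator:
  fixes L s \<alpha> \<beta> :: real
  assumes "0 < L" "0 < \<alpha>" "0 < \<beta>"
  defines "x \<equiv> L * s / (1 + L - s)"
  shows "ennreal (indicator {0<..<1} x * x powr (\<alpha> - 1) * (1 - x) powr (\<beta> - 1) * (x + L) powr (- (\<alpha> + \<beta>)))
           * ennreal (L * (1 + L) / (1 + L - s)\<^sup>2) * indicator {0..1} s
       = ennreal (L powr (- \<beta>) * (1 + L) powr (- \<alpha>))
           * ennreal (indicator {0..1} s * s powr (\<alpha> - 1) * (1 - s) powr (\<beta> - 1))"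
proof -
  consider "0 < s \<and> s < 1" | "s < 0 \<or> 1 < s" | "s = 0" | "s = 1"
    by linarith
  then show ?thesis
  proof cases
    case 1
    have "L * s < L"
      using 1 \<open>0 < L\<close> by simp
    then have "s + L * s < 1 + L"
      using 1 by linarith
    then have "0 < x" "x < 1"
      using 1 \<open>0 < L\<close> by (auto simp: x_def field_simps)
    have "x powr (\<alpha> - 1) * (1 - x) powr (\<beta> - 1) * (x + L) powr (- (\<alpha> + \<beta>)) * (L * (1 + L) / (1 + L - s)\<^sup>2)
        = L powr (- \<beta>) * (1 + L) powr (- \<alpha>) * (s powr (\<alpha> - 1) * (1 - s) powr (\<beta> - 1))"
      unfolding x_def using 1 \<open>0 < L\<close> by (intro shifted_beta_integrand_moebius) auto
    with 1 \<open>0 < x\<close> \<open>x < 1\<close> \<open>0 < L\<close> show ?thesis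
      by (simp add: ennreal_mult'[symmetric])
  qed (use assms in \<open>auto simp: x_def indicator_def\<close>)
qed

text \<open>The Moebius substitution \<open>x = L s / (1 + L - s)\<close> fixes \<open>0\<close> and \<open>1\<close> and turns the
  integrand into a beta integrand.\<close>
lemma nn_integral_Beta_shifted:
  fixes L \<alpha> \<beta> :: real
  assumes "0 < L" "0 < \<alpha>" "0 < \<beta>"
  shows "(\<integral>\<^sup>+x. ennreal (indicator {0<..<1} x * x powr (\<alpha> - 1) * (1 - x) powr (\<beta> - 1) * (x + L) powr (- (\<alpha> + \<beta>))) \<partial>lborel)
       = ennreal (Beta \<alpha> \<beta> * L powr (- \<beta>) * (1 + L) powr (- \<alpha>))"
proof -
  define f where "f x = ennreal (indicator {0<..<1} x * x powr (\<alpha> - 1) * (1 - x) powr (\<beta> - 1) * (x + L) powr (- (\<alpha> + \<beta>)))" for x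
  define g where "g s = L * s / (1 + L - s)" for s
  define g' where "g' s = L * (1 + L) / (1 + L - s)\<^sup>2" for s
  define C where "C = L powr (- \<beta>) * (1 + L) powr (- \<alpha>)"
  have [measurable]: "f \<in> borel_measurable borel"
    unfolding f_def by measurable
  have g01: "g 0 = 0" "g 1 = 1"
    using \<open>0 < L\<close> by (simp_all add: g_def)
  have "(g has_real_derivative g' s) (at s)" if "s \<in> {0..1}" for s
  proof -
    have "1 + L - s \<noteq> 0"
      using that \<open>0 < L\<close> by auto
    then show ?thesis
      unfolding g_def g'_def by (auto intro!: derivative_eq_intros simp: field_simps power2_eq_square)
  qed
  moreover have "continuous_on {0..1} g'"
    unfolding g'_def using \<open>0 < L\<close> by (intro continuous_intros) auto
  ultimately have "(\<integral>\<^sup>+x. f x * indicator {g 0..g 1} x \<partial>lborel) = (\<integral>\<^sup>+s. f (g s) * g' s * indicator {0..1} s \<partial>lborel)"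
    using \<open>0 < L\<close> by (intro nn_integral_substitution_aux) (auto simp: g'_def)
  also have "(\<lambda>x. f x * indicator {g 0..g 1} x) = f"
    by (auto simp: g01 f_def fun_eq_iff indicator_def)
  also have "(\<lambda>s. f (g s) * ennreal (g' s) * indicator {0..1} s)
      = (\<lambda>s. ennreal C * ennreal (indicator {0..1} s * s powr (\<alpha> - 1) * (1 - s) powr (\<beta> - 1)))"
    unfolding f_def g_def g'_def C_def using assms by (intro ext shifted_beta_integrand_moebius_indicator)
  also have "(\<integral>\<^sup>+s. ennreal C * ennreal (indicator {0..1} s * s powr (\<alpha> - 1) * (1 - s) powr (\<beta> - 1)) \<partial>lborel)
      = ennreal C * ennreal (Beta \<alpha> \<beta>)"
    using assms by (subst nn_integral_cmult) (auto simp: nn_integral_Beta_real)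
  finally show ?thesis
    using assms by (simp add: f_def C_def Beta_def ennreal_mult'[symmetric] mult_ac)
qed

lemma Beta_complement_ratio:
  fixes a b :: real
  assumes "0 < a" "a < 1" "0 < b"
  shows "b * Beta (a + b) (1 - a) / Beta a (1 - a) = 1 / Beta a b"
proof -
  have "Gamma (b + 1) = b * Gamma b"
    using \<open>0 < b\<close> Gamma_plus1[of b] by (simp add: nonpos_Ints_def)
  moreover have "Gamma a \<noteq> 0" "Gamma (1 - a) \<noteq> 0" "Gamma b \<noteq> 0" "Gamma (a + b) \<noteq> 0"
    using assms by (simp_all add: Gamma_real_pos_exp)
  ultimately show ?thesis
    using \<open>0 < b\<close> by (simp add: Beta_def divide_simps mult_ac)
qed

section \<open>The hierarchy\<close>

lemma nn_integral_exponential_density_le_1: "(\<integral>\<^sup>+u. ennreal (exponential_density l u) \<partial>lborel) \<le> 1"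
proof (cases "0 < l")
  case True
  then interpret prob_space "density lborel (exponential_density l)"
    by (rule prob_space_exponential_density)
  show ?thesis
    using emeasure_space_1 by (simp add: emeasure_density)
next
  case False
  then have "ennreal (exponential_density l u) = 0" for u
    by (auto simp: exponential_density_def ennreal_eq_0_iff mult_nonpos_nonneg)
  then show ?thesis
    by simp
qed

definition gamma_exp_mixture :: "real \<Rightarrow> real \<Rightarrow> ennreal" where
  "gamma_exp_mixture z u = (\<integral>\<^sup>+v. ennreal (gamma_density z 1 v) * ennreal (exponential_density v u) \<partial>lborel)"

definition gamma_gamma_exp_mixture :: "real \<Rightarrow> real \<Rightarrow> real \<Rightarrow> ennreal" where
  "gamma_gamma_exp_mixture b w u = (\<integral>\<^sup>+z. ennreal (gamma_density b w z) * gamma_exp_mixture z u \<partial>lborel)"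

lemma borel_measurable_gamma_exp_mixture[measurable]:
  "case_prod gamma_exp_mixture \<in> borel_measurable (lborel \<Otimes>\<^sub>M lborel)"
  unfolding gamma_exp_mixture_def by measurable

lemma borel_measurable_gamma_gamma_exp_mixture[measurable]:
  "case_prod (gamma_gamma_exp_mixture b) \<in> borel_measurable (lborel \<Otimes>\<^sub>M lborel)"
  unfolding gamma_gamma_exp_mixture_def by measurable

lemma gamma_exp_mixture_eq:
  assumes "0 < z" "0 \<le> u"
  shows "gamma_exp_mixture z u = ennreal (z / (1 + u) powr (z + 1))"
proof -
  have "ennreal (gamma_density z 1 v) * ennreal (exponential_density v u)
      = ennreal (gamma_density z 1 v * (v * exp (- u * v)))" for v
    using assms by (cases "0 < v") (simp_all add: gamma_density_def exponential_density_def ennreal_mult'[symmetric])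
  then show ?thesis
    using nn_integral_gamma_density_mult_exp[of z 1 u] assms by (simp add: gamma_exp_mixture_def add.commute)
qed

lemma gamma_exp_mixture_neg: "u < 0 \<Longrightarrow> gamma_exp_mixture z u = 0"
  by (simp add: gamma_exp_mixture_def exponential_density_def)

lemma nn_integral_gamma_lomax:
  assumes "0 < b" "0 < w" "0 \<le> u"
  shows "(\<integral>\<^sup>+z. ennreal (gamma_density b w z) * ennreal (z / (1 + u) powr (z + 1)) \<partial>lborel)
       = ennreal (b * w powr b / ((1 + u) * (w + ln (1 + u)) powr (b + 1)))"
proof -
  have "z / (1 + u) powr (z + 1) = 1 / (1 + u) * (z * exp (- ln (1 + u) * z))" for z
  proof -
    have "(1 + u) powr (z + 1) = (1 + u) * exp (ln (1 + u) * z)"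
      using \<open>0 \<le> u\<close> by (simp add: powr_def distrib_right exp_add mult.commute)
    then show ?thesis
      by (simp add: exp_minus field_simps)
  qed
  then have "(\<integral>\<^sup>+z. ennreal (gamma_density b w z) * ennreal (z / (1 + u) powr (z + 1)) \<partial>lborel)
      = (\<integral>\<^sup>+z. ennreal (1 / (1 + u)) * ennreal (gamma_density b w z * (z * exp (- ln (1 + u) * z))) \<partial>lborel)"
    using \<open>0 \<le> u\<close> by (intro nn_integral_cong) (simp add: gamma_density_def ennreal_mult'[symmetric] mult_ac)
  also have "\<dots> = ennreal (1 / (1 + u)) * ennreal (b * w powr b / (w + ln (1 + u)) powr (b + 1))"
    using assms by (subst nn_integral_cmult, measurable, subst nn_integral_gamma_density_mult_exp) simp_all
  finally show ?thesis
    using assms by (simp add: ennreal_mult'[symmetric])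
qed

lemma gamma_gamma_exp_mixture_eq:
  assumes "0 < b" "0 < w" "0 \<le> u"
  shows "gamma_gamma_exp_mixture b w u = ennreal (b * w powr b / ((1 + u) * (w + ln (1 + u)) powr (b + 1)))"
proof -
  have "ennreal (gamma_density b w z) * gamma_exp_mixture z u
      = ennreal (gamma_density b w z) * ennreal (z / (1 + u) powr (z + 1))" for z
    using \<open>0 \<le> u\<close> by (cases "0 < z") (simp_all add: gamma_exp_mixture_eq, simp add: gamma_density_def)
  then show ?thesis
    using assms by (simp add: gamma_gamma_exp_mixture_def nn_integral_gamma_lomax)
qed

lemma nn_integral_gamma_exp_mixture_le_1:
  assumes "0 < z"
  shows "(\<integral>\<^sup>+u. gamma_exp_mixture z u \<partial>lborel) \<le> 1"
  unfolding gamma_exp_mixture_def using assms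
  by (intro lborel_pair.nn_integral_mixture_le_1)
    (simp_all add: nn_integral_gamma_density nn_integral_exponential_density_le_1)

lemma nn_integral_gamma_gamma_exp_mixture_le_1:
  assumes "0 < b" "0 < w"
  shows "(\<integral>\<^sup>+u. gamma_gamma_exp_mixture b w u \<partial>lborel) \<le> 1"
  unfolding gamma_gamma_exp_mixture_def
proof (rule lborel_pair.nn_integral_mixture_le_1)
  show "(\<integral>\<^sup>+z. ennreal (gamma_density b w z) \<partial>lborel) \<le> 1"
    using assms by (simp add: nn_integral_gamma_density)
  show "AE z in density lborel (\<lambda>z. ennreal (gamma_density b w z)). (\<integral>\<^sup>+u. gamma_exp_mixture z u \<partial>lborel) \<le> 1"
    by (auto simp: AE_density gamma_density_def nn_integral_gamma_exp_mixture_le_1 intro!: AE_I2)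
qed simp_all

lemma bind_gamma_exponential:
  "density lborel (\<lambda>v. ennreal (gamma_density z 1 v)) \<bind> (\<lambda>v. density lborel (\<lambda>u. ennreal (exponential_density v u)))
     = density lborel (gamma_exp_mixture z)"
  unfolding gamma_exp_mixture_def[abs_def]
  by (rule lborel_pair.bind_density_kernel) (simp_all add: nn_integral_exponential_density_le_1)

text \<open>For \<open>z \<le> 0\<close> the junk law \<open>Ga(z, 1)\<close> may have infinite mass, so the kernel
  \<open>gamma_exp_mixture\<close> is sub-probability only almost everywhere (likewise for
  \<open>gamma_gamma_exp_mixture b w\<close> and \<open>w \<le> 0\<close>).\<close>
lemma bind_gamma_gamma_exp_mixture:
  "density lborel (\<lambda>z. ennreal (gamma_density b w z)) \<bind> (\<lambda>z. density lborel (gamma_exp_mixture z))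
     = density lborel (gamma_gamma_exp_mixture b w)"
  unfolding gamma_gamma_exp_mixture_def[abs_def]
  by (rule lborel_pair.bind_density_kernel)
    (auto simp: AE_density gamma_density_def nn_integral_gamma_exp_mixture_le_1 intro!: AE_I2)

lemma nn_integral_beta_mix_pi_RSB:
  assumes "0 < a" "a < 1" "0 < b" "0 < u"
  shows "(\<integral>\<^sup>+w. ennreal (beta_density a (1 - a) w) * ennreal (b * w powr b / ((1 + u) * (w + ln (1 + u)) powr (b + 1))) \<partial>lborel)
       = ennreal (pi_RSB u a b)"
proof -
  define L where "L = ln (1 + u)"
  have "0 < L"
    using assms by (simp add: L_def)
  have Gamma_pos: "0 < Gamma a" "0 < Gamma (1 - a)"
    using assms by simp_all
  define K where "K = b / ((1 + u) * Beta a (1 - a))"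
  have "0 < K"
    using assms Gamma_pos by (simp add: K_def Beta_def)
  have integrand: "ennreal (beta_density a (1 - a) w) * ennreal (b * w powr b / ((1 + u) * (w + L) powr (b + 1)))
      = ennreal K * ennreal (indicator {0<..<1} w * w powr (a + b - 1) * (1 - w) powr (1 - a - 1)
          * (w + L) powr (- ((a + b) + (1 - a))))" for w
  proof (cases "0 < w \<and> w < 1")
    case True
    have "w powr (a - 1) * w powr b = w powr (a + b - 1)"
      using True by (simp add: powr_add[symmetric] algebra_simps)
    moreover have "1 / (w + L) powr (b + 1) = (w + L) powr (- ((a + b) + (1 - a)))"
      using powr_minus_divide[of "w + L" "b + 1"] by (simp add: algebra_simps)
    moreover have "beta_density a (1 - a) w * (b * w powr b / ((1 + u) * (w + L) powr (b + 1)))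
        = K * ((w powr (a - 1) * w powr b) * (1 - w) powr (1 - a - 1) * (1 / (w + L) powr (b + 1)))"
      using True by (simp add: beta_density_def K_def field_simps)
    moreover have "0 \<le> beta_density a (1 - a) w"
      using Gamma_pos by (simp add: beta_density_def Beta_def)
    ultimately show ?thesis
      using True \<open>0 < K\<close> by (simp add: ennreal_mult'[symmetric])
  qed (auto simp: beta_density_def)
  have "K * Beta (a + b) (1 - a) = b * Beta (a + b) (1 - a) / Beta a (1 - a) * (1 / (1 + u))"
    by (simp add: K_def mult_ac)
  then have "K * Beta (a + b) (1 - a) = 1 / Beta a b * (1 / (1 + u))"
    unfolding Beta_complement_ratio[OF assms(1-3)] .
  then have "K * (Beta (a + b) (1 - a) * L powr (- (1 - a)) * (1 + L) powr (- (a + b)))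
      = 1 / Beta a b * (1 / (1 + u)) * L powr (a - 1) * (1 / (1 + L) powr (a + b))"
    by (simp only: powr_minus_divide minus_diff_eq mult.assoc[symmetric])
  also have "\<dots> = pi_RSB u a b"
    using \<open>0 < u\<close> by (simp add: pi_RSB_def L_def)
  finally have closed_form: "ennreal K * ennreal (Beta (a + b) (1 - a) * L powr (- (1 - a)) * (1 + L) powr (- (a + b)))
      = ennreal (pi_RSB u a b)"
    using \<open>0 < K\<close> by (simp add: ennreal_mult'[symmetric])
  have "(\<integral>\<^sup>+w. ennreal (beta_density a (1 - a) w) * ennreal (b * w powr b / ((1 + u) * (w + ln (1 + u)) powr (b + 1))) \<partial>lborel)
      = ennreal K * ennreal (Beta (a + b) (1 - a) * L powr (- (1 - a)) * (1 + L) powr (- (a + b)))"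
    unfolding L_def[symmetric] integrand using assms \<open>0 < L\<close>
    by (subst nn_integral_cmult, measurable, subst nn_integral_Beta_shifted) simp_all
  then show ?thesis
    unfolding closed_form .
qed

text \<open>At \<open>u = 0\<close> the integral diverges (the \<open>w\<close>-integrand behaves like \<open>w powr (a - 2)\<close>),
  so the density is only identified almost everywhere.\<close>
lemma nn_integral_beta_gamma_gamma_exp_mixture:
  assumes "0 < a" "a < 1" "0 < b" "u \<noteq> 0"
  shows "(\<integral>\<^sup>+w. ennreal (beta_density a (1 - a) w) * gamma_gamma_exp_mixture b w u \<partial>lborel) = ennreal (pi_RSB u a b)"
proof (cases "0 < u")
  case True
  have "ennreal (beta_density a (1 - a) w) * gamma_gamma_exp_mixture b w u
      = ennreal (beta_density a (1 - a) w) * ennreal (b * w powr b / ((1 + u) * (w + ln (1 + u)) powr (b + 1)))" for w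
    using True \<open>0 < b\<close> by (cases "0 < w") (simp_all add: gamma_gamma_exp_mixture_eq, simp add: beta_density_def)
  then show ?thesis
    using assms True by (simp add: nn_integral_beta_mix_pi_RSB)
next
  case False
  with \<open>u \<noteq> 0\<close> show ?thesis
    by (simp add: gamma_gamma_exp_mixture_def gamma_exp_mixture_neg pi_RSB_def)
qed

theorem mainTheorem3:
  fixes a b :: real
  assumes "0 < a" "a < 1" "0 < b"
  shows "(density lborel (\<lambda>w. ennreal (beta_density a (1 - a) w)) \<bind>
           (\<lambda>w. density lborel (\<lambda>z. ennreal (gamma_density b w z)) \<bind>
             (\<lambda>z. density lborel (\<lambda>v. ennreal (gamma_density z 1 v)) \<bind>
               (\<lambda>v. density lborel (\<lambda>u. ennreal (exponential_density v u))))))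
         = density lborel (\<lambda>u. ennreal (pi_RSB u a b))"
proof -
  have "density lborel (\<lambda>w. ennreal (beta_density a (1 - a) w)) \<bind> (\<lambda>w. density lborel (gamma_gamma_exp_mixture b w))
      = density lborel (\<lambda>u. \<integral>\<^sup>+w. ennreal (beta_density a (1 - a) w) * gamma_gamma_exp_mixture b w u \<partial>lborel)"
    using \<open>0 < b\<close> by (intro lborel_pair.bind_density_kernel)
      (auto simp: AE_density beta_density_def nn_integral_gamma_gamma_exp_mixture_le_1 intro!: AE_I2)
  also have "\<dots> = density lborel (\<lambda>u. ennreal (pi_RSB u a b))"
    using assms by (intro density_cong eventually_mono[OF AE_lborel_singleton[of 0]]
        nn_integral_beta_gamma_gamma_exp_mixture) auto
  finally show ?thesis
    by (simp add: bind_gamma_exponential bind_gamma_gamma_exp_mixture)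
qed

end
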